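(* Let $s\ge2$, let $H$ be a graph, let $k\ge s+1$ and $n\ge s+2$, and let $\{S_X: X\subseteq\{1,\dots,n\},\ |X|=s\}$ be pairwise distinct $(k-1)$-cliques of $H$ such that for every $(s+1)$-subset $A\subseteq\{1,\dots,n\}$ there is a $k$-clique $Q_A$ of $H$ which contains $S_X$ for every $s$-subset $X\subseteq A$ and contains no $S_Y$ with $Y\not\subseteq A$. Then there exist a $(k-s-1)$-clique $T$ of $H$ and pairwise distinct vertices $x_1,\dots,x_n\in V(H)\setminus T$ such that \[ S_X=T\cup\{x_i: i\in X\}\qquad\text{for every $s$-subset } X\subseteq\{1,\dots,n\}. \]
   Context: All graphs are finite, simple, undirected. A $k$-clique of a graph $H$ is a set of $k$ pairwise adjacent vertices of $H$ (a $0$-clique is the empty set). *)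

theory Defs
  imports Main
begin

definition simple_graph :: "'v set \<Rightarrow> ('v \<Rightarrow> 'v \<Rightarrow> bool) \<Rightarrow> bool" where
  "simple_graph V E \<longleftrightarrow> finite V \<and> (\<forall>u v. E u v \<longrightarrow> u \<in> V \<and> v \<in> V)
     \<and> (\<forall>u v. E u v \<longrightarrow> E v u) \<and> (\<forall>v. \<not> E v v)"

definition is_clique :: "'v set \<Rightarrow> ('v \<Rightarrow> 'v \<Rightarrow> bool) \<Rightarrow> nat \<Rightarrow> 'v set \<Rightarrow> bool" where
  "is_clique V E k C \<longleftrightarrow> C \<subseteq> V \<and> finite C \<and> card C = k
     \<and> (\<forall>u\<in>C. \<forall>v\<in>C. u \<noteq> v \<longrightarrow> E u v)"

end

theory Submission
  imports Defs "HOL-Library.Ramsey"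
begin

text \<open>
  Every \<open>Q A\<close> is one vertex larger than each of the \<open>s + 1\<close> cliques \<open>S (A - {a})\<close> it
  contains, so \<open>Q A = S (A - {a}) \<union> {opposite A a}\<close> for an injective labelling
  \<open>opposite A\<close> of \<open>A\<close> by vertices of \<open>Q A\<close>; the remaining vertices form the core of \<open>Q A\<close>.
  The exclusion property of the \<open>Q A\<close> forces \<open>S (insert a W) \<inter> S (insert b W) \<subseteq> S (insert c W)\<close>
  for distinct \<open>a, b, c\<close> outside an \<open>(s - 1)\<close>-set \<open>W\<close>, hence exchanging one element of \<open>A\<close>
  for a new one changes neither the labels of the other elements nor the core. Any two
  \<open>(s + 1)\<close>-sets are connected by such exchanges, so labels and core do not depend on \<open>A\<close>:
  they are the vertices \<open>x i\<close> and the clique \<open>T\<close>.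
\<close>

lemma nsets_extend:
  assumes "finite I" "B \<subseteq> I" "card B \<le> r" "r \<le> card I"
  obtains A where "A \<in> [I]\<^bsup>r\<^esup>" "B \<subseteq> A"
  using exists_subset_between[OF assms(3,4,2,1)] assms(1)
  by (auto simp: nsets_def intro: finite_subset)

lemma nsets_Diff_singleton: "A \<in> [I]\<^bsup>Suc r\<^esup> \<Longrightarrow> a \<in> A \<Longrightarrow> A - {a} \<in> [I]\<^bsup>r\<^esup>"
  by (auto simp: nsets_def)

lemma nsets_insert: "X \<in> [I]\<^bsup>r\<^esup> \<Longrightarrow> c \<in> I - X \<Longrightarrow> insert c X \<in> [I]\<^bsup>Suc r\<^esup>"
  by (auto simp: nsets_def)

lemma nsets_exchange_induct:
  assumes "A \<in> [I]\<^bsup>r\<^esup>" "B \<in> [I]\<^bsup>r\<^esup>" "P B"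
    and exchange: "\<And>A b c. A \<in> [I]\<^bsup>r\<^esup> \<Longrightarrow> b \<in> A - B \<Longrightarrow> c \<in> B - A \<Longrightarrow>
                     P (insert c (A - {b})) \<Longrightarrow> P A"
  shows "P A"
proof -
  have "P A" if "A \<in> [I]\<^bsup>r\<^esup>" "card (A - B) = d" for A d
    using that
  proof (induction d arbitrary: A)
    case 0
    then have "A \<subseteq> B" using \<open>B \<in> [I]\<^bsup>r\<^esup>\<close> by (auto simp: nsets_def)
    then have "A = B" using 0 \<open>B \<in> [I]\<^bsup>r\<^esup>\<close> by (auto simp: nsets_def card_subset_eq)
    then show ?case using \<open>P B\<close> by simp
  next
    case (Suc d)
    have fin: "finite A" "finite B" "card A = card B"
      using Suc.prems(1) \<open>B \<in> [I]\<^bsup>r\<^esup>\<close> by (auto simp: nsets_def)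
    obtain b where b: "b \<in> A - B"
      using Suc.prems(2) by (metis card.empty ex_in_conv nat.distinct(1))
    have "card (B - A) = card (A - B)"
      using fin by (simp add: card_Diff_subset_Int Int_commute)
    then obtain c where c: "c \<in> B - A"
      using Suc.prems(2) by (metis card.empty ex_in_conv nat.distinct(1))
    have "insert c (A - {b}) \<in> [I]\<^bsup>r\<^esup>"
      using Suc.prems(1) \<open>B \<in> [I]\<^bsup>r\<^esup>\<close> b c
      by (auto simp: nsets_def) (metis Suc_pred card_gt_0_iff empty_iff)
    moreover have "card (insert c (A - {b}) - B) = d"
      using Suc.prems(2) b c fin by (simp add: Diff_insert2 [symmetric] card_Diff_singleton)
    ultimately show ?case using Suc b c exchange by blast
  qed
  then show ?thesis using assms(1) by blast
qed

lemma is_clique_subset: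
  assumes "is_clique V E k Q" "C \<subseteq> Q"
  shows "is_clique V E (card C) C"
  using assms unfolding is_clique_def by (auto intro: finite_subset)

lemma eq_insert_Diff_if_Diff_singletons:
  "A - C = {v} \<Longrightarrow> C - A = {w} \<Longrightarrow> A = insert v (C - {w})"
  by auto

locale facet_system =
  fixes I :: "'i set" and s m :: nat and S Q :: "'i set \<Rightarrow> 'v set"
  assumes finite_I: "finite I" and s_pos: "0 < s" and card_I: "s < card I"
    and card_S: "X \<in> [I]\<^bsup>s\<^esup> \<Longrightarrow> card (S X) = m"
    and inj_S: "inj_on S ([I]\<^bsup>s\<^esup>)"
    and card_Q: "A \<in> [I]\<^bsup>Suc s\<^esup> \<Longrightarrow> card (Q A) = Suc m"
    and S_subset_Q: "A \<in> [I]\<^bsup>Suc s\<^esup> \<Longrightarrow> X \<in> [A]\<^bsup>s\<^esup> \<Longrightarrow> S X \<subseteq> Q A"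
    and S_not_subset_Q: "A \<in> [I]\<^bsup>Suc s\<^esup> \<Longrightarrow> Y \<in> [I]\<^bsup>s\<^esup> \<Longrightarrow> \<not> Y \<subseteq> A \<Longrightarrow> \<not> S Y \<subseteq> Q A"
begin

definition opposite :: "'i set \<Rightarrow> 'i \<Rightarrow> 'v" where
  "opposite A a = the_elem (Q A - S (A - {a}))"

lemma finite_Q: "A \<in> [I]\<^bsup>Suc s\<^esup> \<Longrightarrow> finite (Q A)"
  by (rule card_ge_0_finite) (simp add: card_Q)

lemma S_facet_subset_Q:
  assumes "A \<in> [I]\<^bsup>Suc s\<^esup>" "a \<in> A"
  shows "S (A - {a}) \<subseteq> Q A"
proof -
  have "A \<in> [A]\<^bsup>Suc s\<^esup>" using assms(1) by (simp add: nsets_def)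
  then show ?thesis using S_subset_Q[OF assms(1) nsets_Diff_singleton] assms(2) by blast
qed

lemma Q_Diff_S_facet:
  assumes A: "A \<in> [I]\<^bsup>Suc s\<^esup>" and a: "a \<in> A"
  shows "Q A - S (A - {a}) = {opposite A a}"
proof -
  have sub: "S (A - {a}) \<subseteq> Q A" by (rule S_facet_subset_Q[OF A a])
  then have "card (Q A - S (A - {a})) = 1"
    using finite_subset[OF sub finite_Q[OF A]] card_Q[OF A]
      card_S[OF nsets_Diff_singleton[OF A a]]
    by (simp add: card_Diff_subset)
  then obtain u where "Q A - S (A - {a}) = {u}" by (metis One_nat_def card_1_singleton_iff)
  then show ?thesis by (simp add: opposite_def)
qed

lemma opposite_in_Q:
  assumes "A \<in> [I]\<^bsup>Suc s\<^esup>" "a \<in> A"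
  shows "opposite A a \<in> Q A"
  using Q_Diff_S_facet[OF assms] by blast

lemma S_facet_eq:
  assumes "A \<in> [I]\<^bsup>Suc s\<^esup>" "a \<in> A"
  shows "S (A - {a}) = Q A - {opposite A a}"
  using Q_Diff_S_facet[OF assms] S_facet_subset_Q[OF assms] by blast

lemma inj_on_opposite:
  assumes A: "A \<in> [I]\<^bsup>Suc s\<^esup>"
  shows "inj_on (opposite A) A"
proof (rule inj_onI)
  fix a b assume ab: "a \<in> A" "b \<in> A" "opposite A a = opposite A b"
  then have "S (A - {a}) = S (A - {b})" using S_facet_eq[OF A] by simp
  then have "A - {a} = A - {b}"
    using inj_onD[OF inj_S _ nsets_Diff_singleton[OF A ab(1)] nsets_Diff_singleton[OF A ab(2)]]
    by blast
  then show "a = b" using ab by blast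
qed

lemma insert2_in_nsets:
  "W \<in> [I]\<^bsup>(s - 1)\<^esup> \<Longrightarrow> a \<in> I - W \<Longrightarrow> b \<in> I - W \<Longrightarrow> a \<noteq> b
    \<Longrightarrow> insert a (insert b W) \<in> [I]\<^bsup>Suc s\<^esup>"
  using s_pos by (auto simp: nsets_def)

lemma insert_in_nsets: "W \<in> [I]\<^bsup>(s - 1)\<^esup> \<Longrightarrow> a \<in> I - W \<Longrightarrow> insert a W \<in> [I]\<^bsup>s\<^esup>"
  using s_pos by (auto simp: nsets_def)

lemma S_insert_Diff_singleton:
  assumes W: "W \<in> [I]\<^bsup>(s - 1)\<^esup>" and ab: "a \<in> I - W" "b \<in> I - W" "a \<noteq> b"
  shows "\<exists>u. S (insert a W) - S (insert b W) = {u}"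
proof -
  define A where "A = insert a (insert b W)"
  have A: "A \<in> [I]\<^bsup>Suc s\<^esup>" unfolding A_def using insert2_in_nsets[OF W ab] .
  have a: "a \<in> A" and b: "b \<in> A" unfolding A_def by simp_all
  have "S (insert a W) = Q A - {opposite A b}"
    using S_facet_eq[OF A b] ab unfolding A_def by (simp add: insert_Diff_if)
  moreover have "S (insert b W) = Q A - {opposite A a}"
    using S_facet_eq[OF A a] ab unfolding A_def by (simp add: insert_Diff_if)
  moreover have "opposite A a \<noteq> opposite A b"
    using inj_on_opposite[OF A] a b ab(3) by (auto dest: inj_onD)
  ultimately have "S (insert a W) - S (insert b W) = {opposite A a}"
    using opposite_in_Q[OF A a] by blast
  then show ?thesis by blast
qed

lemma S_insert_Int_subset:
  assumes W: "W \<in> [I]\<^bsup>(s - 1)\<^esup>" and abc: "a \<in> I - W" "b \<in> I - W" "c \<in> I - W"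
    and distinct: "a \<noteq> b" "a \<noteq> c" "b \<noteq> c"
  shows "S (insert a W) \<inter> S (insert b W) \<subseteq> S (insert c W)"
proof
  let ?Sa = "S (insert a W)" and ?Sb = "S (insert b W)" and ?Sc = "S (insert c W)"
  fix v assume v: "v \<in> ?Sa \<inter> ?Sb"
  show "v \<in> ?Sc"
  proof (rule ccontr)
    assume "v \<notin> ?Sc"
    have singleton: "X = {v}" if "\<exists>u. X = {u}" "v \<in> X" for X
      using that by blast
    have a_c: "?Sa - ?Sc = {v}"
      using singleton S_insert_Diff_singleton[OF W abc(1,3) distinct(2)] v \<open>v \<notin> ?Sc\<close> by blast
    have b_c: "?Sb - ?Sc = {v}"
      using singleton S_insert_Diff_singleton[OF W abc(2,3) distinct(3)] v \<open>v \<notin> ?Sc\<close> by blast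
    obtain w w' where c_a: "?Sc - ?Sa = {w}" and c_b: "?Sc - ?Sb = {w'}"
      using S_insert_Diff_singleton[OF W abc(3,1)] S_insert_Diff_singleton[OF W abc(3,2)] distinct
      by fastforce
    show False
    proof (cases "w \<in> ?Sb")
      case True
      define A where "A = insert a (insert b W)"
      have A: "A \<in> [I]\<^bsup>Suc s\<^esup>" unfolding A_def by (rule insert2_in_nsets[OF W abc(1,2) distinct(1)])
      have "?Sa \<subseteq> Q A" "?Sb \<subseteq> Q A"
        using S_facet_subset_Q[OF A, of b] S_facet_subset_Q[OF A, of a] abc distinct
        unfolding A_def by (simp_all add: insert_Diff_if)
      moreover have "?Sc \<subseteq> insert w ?Sa" using c_a by blast
      ultimately have "?Sc \<subseteq> Q A" using True by blast
      moreover have "\<not> insert c W \<subseteq> A" unfolding A_def using abc distinct by auto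
      ultimately show False
        using S_not_subset_Q[OF A insert_in_nsets[OF W abc(3)]] by blast
    next
      case False
      \<comment> \<open>then \<open>S (insert a W)\<close> and \<open>S (insert b W)\<close> both arise from \<open>S (insert c W)\<close>
        by exchanging \<open>w\<close> for \<open>v\<close>\<close>
      with c_b c_a have "?Sc - ?Sb = {w}" by auto
      then have "?Sa = ?Sb"
        using eq_insert_Diff_if_Diff_singletons[OF a_c c_a]
          eq_insert_Diff_if_Diff_singletons[OF b_c] by simp
      then have "insert a W = insert b W"
        using inj_onD[OF inj_S _ insert_in_nsets[OF W abc(1)] insert_in_nsets[OF W abc(2)]] by blast
      then show False using abc distinct by blast
    qed
  qed
qed

lemma opposite_exchange:
  assumes A: "A \<in> [I]\<^bsup>Suc s\<^esup>" and ab: "a \<in> A" "b \<in> A" "a \<noteq> b" and c: "c \<in> I - A"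
  shows "opposite (insert c (A - {b})) a = opposite A a"
proof -
  define W where "W = A - {a, b}"
  define A' where "A' = insert c (A - {b})"
  have A': "A' \<in> [I]\<^bsup>Suc s\<^esup>"
    unfolding A'_def by (rule nsets_insert[OF nsets_Diff_singleton[OF A ab(2)]]) (use c in blast)
  have "card W = s - 1"
    using A ab unfolding W_def by (simp add: nsets_def card_Diff_subset)
  then have W: "W \<in> [I]\<^bsup>(s - 1)\<^esup>" using A unfolding W_def by (auto simp: nsets_def)
  have in_I: "a \<in> I - W" "b \<in> I - W" "c \<in> I - W"
    using A ab c unfolding W_def by (auto simp: nsets_def)
  have a': "a \<in> A'" and c': "c \<in> A'" unfolding A'_def using ab by auto
  have facets: "A' - {c} = insert a W" "A' - {a} = insert c W"
    "A - {b} = insert a W" "A - {a} = insert b W"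
    unfolding W_def A'_def using ab c by auto
  let ?u = "opposite A' a"
  have "?u \<noteq> opposite A' c"
    using inj_onD[OF inj_on_opposite[OF A'] _ a' c'] ab(1) c by blast
  then have "?u \<in> S (insert a W)"
    using S_facet_eq[OF A' c'] opposite_in_Q[OF A' a'] facets(1) by simp
  moreover have "?u \<notin> S (insert c W)" using S_facet_eq[OF A' a'] facets(2) by simp
  ultimately have "?u \<notin> S (A - {a})"
    using S_insert_Int_subset[OF W in_I] ab(3) c facets(4) by auto
  moreover have "?u \<in> Q A"
    using S_facet_subset_Q[OF A ab(2)] facets(3) \<open>?u \<in> S (insert a W)\<close> by auto
  ultimately have "?u \<in> Q A - S (A - {a})" by blast
  then show ?thesis using Q_Diff_S_facet[OF A ab(1)] unfolding A'_def by simp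
qed

definition cell_core :: "'i set \<Rightarrow> 'v set" where
  "cell_core A = Q A - opposite A ` A"

lemma cell_core_eq:
  assumes A: "A \<in> [I]\<^bsup>Suc s\<^esup>" and b: "b \<in> A"
  shows "cell_core A = S (A - {b}) - opposite A ` (A - {b})"
proof -
  have "opposite A ` A = insert (opposite A b) (opposite A ` (A - {b}))"
    using b by blast
  then show ?thesis unfolding cell_core_def using S_facet_eq[OF A b] by auto
qed

lemma cell_core_exchange:
  assumes A: "A \<in> [I]\<^bsup>Suc s\<^esup>" and b: "b \<in> A" and c: "c \<in> I - A"
  shows "cell_core (insert c (A - {b})) = cell_core A"
proof -
  define A' where "A' = insert c (A - {b})"
  have A': "A' \<in> [I]\<^bsup>Suc s\<^esup>"
    unfolding A'_def by (rule nsets_insert[OF nsets_Diff_singleton[OF A b]]) (use c in blast)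
  have "A' - {c} = A - {b}" unfolding A'_def using c by auto
  moreover have "opposite A' ` (A - {b}) = opposite A ` (A - {b})"
    using opposite_exchange[OF A _ b _ c] unfolding A'_def by (intro image_cong) auto
  ultimately have "cell_core A' = S (A - {b}) - opposite A ` (A - {b})"
    using cell_core_eq[OF A', of c] unfolding A'_def by simp
  then show ?thesis using cell_core_eq[OF A b] unfolding A'_def by simp
qed

lemma opposite_indep:
  assumes A: "A \<in> [I]\<^bsup>Suc s\<^esup>" and B: "B \<in> [I]\<^bsup>Suc s\<^esup>" and i: "i \<in> A" "i \<in> B"
  shows "opposite A i = opposite B i"
proof -
  have "i \<in> A \<longrightarrow> opposite A i = opposite B i"
  proof (rule nsets_exchange_induct[OF A B])
    fix A b c
    assume A: "A \<in> [I]\<^bsup>Suc s\<^esup>" and b: "b \<in> A - B" and c: "c \<in> B - A"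
      and IH: "i \<in> insert c (A - {b}) \<longrightarrow> opposite (insert c (A - {b})) i = opposite B i"
    show "i \<in> A \<longrightarrow> opposite A i = opposite B i"
    proof
      assume "i \<in> A"
      moreover have "i \<noteq> b" using b i(2) by blast
      moreover have "c \<in> I - A" using c B by (auto simp: nsets_def)
      ultimately show "opposite A i = opposite B i"
        using opposite_exchange[OF A, of i b c] IH b by auto
    qed
  qed simp
  then show ?thesis using i(1) by blast
qed

lemma cell_core_indep:
  assumes "A \<in> [I]\<^bsup>Suc s\<^esup>" "B \<in> [I]\<^bsup>Suc s\<^esup>"
  shows "cell_core A = cell_core B"
  using assms
proof (rule nsets_exchange_induct)
  fix A b c
  assume "A \<in> [I]\<^bsup>Suc s\<^esup>" "b \<in> A - B" "c \<in> B - A"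
    and "cell_core (insert c (A - {b})) = cell_core B"
  then show "cell_core A = cell_core B"
    using cell_core_exchange[of A b c] assms(2) by (auto simp: nsets_def)
qed simp

lemma ex_cell_containing:
  assumes "B \<subseteq> I" "card B \<le> Suc s"
  obtains A where "A \<in> [I]\<^bsup>Suc s\<^esup>" "B \<subseteq> A"
  using nsets_extend[OF finite_I assms] card_I by auto

definition vertex :: "'i \<Rightarrow> 'v" where
  "vertex i = opposite (SOME A. A \<in> [I]\<^bsup>Suc s\<^esup> \<and> i \<in> A) i"

definition core :: "'v set" where
  "core = cell_core (SOME A. A \<in> [I]\<^bsup>Suc s\<^esup>)"

lemma opposite_eq_vertex:
  assumes A: "A \<in> [I]\<^bsup>Suc s\<^esup>" and i: "i \<in> A"
  shows "opposite A i = vertex i"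
proof -
  have "\<exists>A. A \<in> [I]\<^bsup>Suc s\<^esup> \<and> i \<in> A" using A i by blast
  then have "(SOME A. A \<in> [I]\<^bsup>Suc s\<^esup> \<and> i \<in> A) \<in> [I]\<^bsup>Suc s\<^esup> \<and>
             i \<in> (SOME A. A \<in> [I]\<^bsup>Suc s\<^esup> \<and> i \<in> A)"
    by (rule someI_ex)
  then show ?thesis using opposite_indep[OF A] i unfolding vertex_def by blast
qed

lemma cell_core_eq_core: "A \<in> [I]\<^bsup>Suc s\<^esup> \<Longrightarrow> cell_core A = core"
  unfolding core_def by (rule cell_core_indep) (auto intro: someI)

lemma vertex_notin_core:
  assumes "i \<in> I"
  shows "vertex i \<notin> core"
proof -
  obtain A where A: "A \<in> [I]\<^bsup>Suc s\<^esup>" "{i} \<subseteq> A"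
    using ex_cell_containing[of "{i}"] assms by auto
  then show ?thesis
    using opposite_eq_vertex[OF A(1)] cell_core_eq_core[OF A(1)] unfolding cell_core_def by auto
qed

lemma inj_on_vertex: "inj_on vertex I"
proof (rule inj_onI)
  fix i j assume ij: "i \<in> I" "j \<in> I" "vertex i = vertex j"
  have "card {i, j} \<le> Suc s" using s_pos by (simp add: card_insert_if)
  then obtain A where A: "A \<in> [I]\<^bsup>Suc s\<^esup>" "{i, j} \<subseteq> A"
    using ex_cell_containing[of "{i, j}"] ij by auto
  then show "i = j"
    using inj_onD[OF inj_on_opposite[OF A(1)]] opposite_eq_vertex[OF A(1)] ij(3) by auto
qed

lemma S_eq_core_Un_vertex:
  assumes X: "X \<in> [I]\<^bsup>s\<^esup>"
  shows "S X = core \<union> vertex ` X"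
proof -
  have "X \<noteq> I" using X card_I by (auto simp: nsets_def)
  then obtain c where c: "c \<in> I - X" using X by (auto simp: nsets_def)
  define A where "A = insert c X"
  have A: "A \<in> [I]\<^bsup>Suc s\<^esup>" unfolding A_def using nsets_insert[OF X c] .
  have cA: "c \<in> A" and X_eq: "A - {c} = X" unfolding A_def using c by auto
  have opp: "opposite A ` X = vertex ` X"
    using opposite_eq_vertex[OF A] unfolding A_def by auto
  have "core = S X - vertex ` X"
    using cell_core_eq[OF A cA] cell_core_eq_core[OF A] X_eq opp by simp
  moreover have "vertex ` X \<subseteq> S X"
  proof
    fix v assume "v \<in> vertex ` X"
    then obtain i where i: "i \<in> X" "v = opposite A i" using opp by auto
    have "i \<noteq> c" using i c by blast
    then have "opposite A i \<noteq> opposite A c"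
      using inj_onD[OF inj_on_opposite[OF A] _ _ cA] i unfolding A_def by blast
    then show "v \<in> S X"
      using S_facet_eq[OF A cA] opposite_in_Q[OF A] i X_eq unfolding A_def by auto
  qed
  ultimately show ?thesis by blast
qed

lemma finite_core: "finite core"
proof -
  obtain A where A: "A \<in> [I]\<^bsup>Suc s\<^esup>" using ex_cell_containing[of "{}"] by auto
  show ?thesis
    using finite_Diff[OF finite_Q[OF A]] cell_core_eq_core[OF A] unfolding cell_core_def by metis
qed

lemma card_core: "card core = m - s"
proof -
  obtain X where X: "X \<in> [I]\<^bsup>s\<^esup>"
    using nsets_extend[OF finite_I, of "{}" s] card_I by auto
  then have "finite X" by (simp add: nsets_def)
  have "core \<inter> vertex ` X = {}" using vertex_notin_core X by (auto simp: nsets_def)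
  moreover have "card (vertex ` X) = s"
    using card_image[OF inj_on_subset[OF inj_on_vertex]] X by (auto simp: nsets_def)
  ultimately have "card (S X) = card core + s"
    using S_eq_core_Un_vertex[OF X] finite_core \<open>finite X\<close> by (simp add: card_Un_disjoint)
  then show ?thesis using card_S[OF X] by simp
qed

end

lemma clique_facets_decompose:
  assumes I: "finite I" "0 < s" "s < card I" and k: "0 < k"
    and S_clique: "\<And>X. X \<in> [I]\<^bsup>s\<^esup> \<Longrightarrow> is_clique V E (k - 1) (S X)"
    and S_inj: "inj_on S ([I]\<^bsup>s\<^esup>)"
    and Q: "\<And>A. A \<in> [I]\<^bsup>Suc s\<^esup> \<Longrightarrow> \<exists>Q. is_clique V E k Q \<and> (\<forall>X \<in> [A]\<^bsup>s\<^esup>. S X \<subseteq> Q)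
              \<and> (\<forall>Y \<in> [I]\<^bsup>s\<^esup>. \<not> Y \<subseteq> A \<longrightarrow> \<not> S Y \<subseteq> Q)"
  shows "\<exists>T x. is_clique V E (k - s - 1) T \<and> inj_on x I \<and> (\<forall>i\<in>I. x i \<in> V - T)
           \<and> (\<forall>X \<in> [I]\<^bsup>s\<^esup>. S X = T \<union> x ` X)"
proof -
  obtain QA where QA: "\<And>A. A \<in> [I]\<^bsup>Suc s\<^esup> \<Longrightarrow> is_clique V E k (QA A)
      \<and> (\<forall>X \<in> [A]\<^bsup>s\<^esup>. S X \<subseteq> QA A) \<and> (\<forall>Y \<in> [I]\<^bsup>s\<^esup>. \<not> Y \<subseteq> A \<longrightarrow> \<not> S Y \<subseteq> QA A)"
    using Q by metis
  interpret facet_system I s "k - 1" S QA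
  proof
    show "card (S X) = k - 1" if "X \<in> [I]\<^bsup>s\<^esup>" for X
      using S_clique[OF that] by (simp add: is_clique_def)
    show "card (QA A) = Suc (k - 1)" if "A \<in> [I]\<^bsup>Suc s\<^esup>" for A
      using QA[OF that] k by (simp add: is_clique_def)
  qed (use I S_inj QA in blast)+
  obtain X0 where X0: "X0 \<in> [I]\<^bsup>s\<^esup>" using nsets_extend[OF I(1), of "{}" s] I(3) by auto
  have "is_clique V E (card core) core"
    using is_clique_subset[OF S_clique[OF X0]] S_eq_core_Un_vertex[OF X0] by blast
  then have T: "is_clique V E (k - s - 1) core" using card_core by simp
  have "vertex i \<in> V" if i: "i \<in> I" for i
  proof -
    obtain X where X: "X \<in> [I]\<^bsup>s\<^esup>" "{i} \<subseteq> X" using nsets_extend[OF I(1), of "{i}" s] i I by auto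
    then show ?thesis
      using S_eq_core_Un_vertex[OF X(1)] S_clique[OF X(1)] unfolding is_clique_def by blast
  qed
  then show ?thesis using T inj_on_vertex vertex_notin_core S_eq_core_Un_vertex by blast
qed

theorem lemma4p20:
  fixes V :: "'v set" and E :: "'v \<Rightarrow> 'v \<Rightarrow> bool"
    and s k n :: nat and S :: "nat set \<Rightarrow> 'v set"
  assumes graph: "simple_graph V E"
    and s2: "s \<ge> 2" and ks: "k \<ge> s + 1" and ns: "n \<ge> s + 2"
    and S_clique: "\<And>X. X \<subseteq> {1..n} \<Longrightarrow> card X = s \<Longrightarrow> is_clique V E (k - 1) (S X)"
    and S_distinct: "inj_on S {X. X \<subseteq> {1..n} \<and> card X = s}"
    and Q: "\<And>A. A \<subseteq> {1..n} \<Longrightarrow> card A = s + 1 \<Longrightarrow>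
              \<exists>Q. is_clique V E k Q
                 \<and> (\<forall>X. X \<subseteq> A \<and> card X = s \<longrightarrow> S X \<subseteq> Q)
                 \<and> (\<forall>Y. Y \<subseteq> {1..n} \<and> card Y = s \<and> \<not> Y \<subseteq> A \<longrightarrow> \<not> S Y \<subseteq> Q)"
  shows "\<exists>T x. is_clique V E (k - s - 1) T
           \<and> inj_on x {1..n} \<and> (\<forall>i\<in>{1..n}. x i \<in> V - T)
           \<and> (\<forall>X. X \<subseteq> {1..n} \<and> card X = s \<longrightarrow> S X = T \<union> x ` X)"
proof -
  have nsets_eq: "[{1..n}]\<^bsup>r\<^esup> = {X. X \<subseteq> {1..n} \<and> card X = r}" for r
    by (auto simp: nsets_def dest: finite_subset[OF _ finite_atLeastAtMost])
  have S_clique': "is_clique V E (k - 1) (S X)" if "X \<in> [{1..n}]\<^bsup>s\<^esup>" for X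
    using that by (intro S_clique) (simp_all add: nsets_def)
  have S_inj: "inj_on S ([{1..n}]\<^bsup>s\<^esup>)" unfolding nsets_eq by (rule S_distinct)
  have Q': "\<exists>Q. is_clique V E k Q \<and> (\<forall>X \<in> [A]\<^bsup>s\<^esup>. S X \<subseteq> Q)
              \<and> (\<forall>Y \<in> [{1..n}]\<^bsup>s\<^esup>. \<not> Y \<subseteq> A \<longrightarrow> \<not> S Y \<subseteq> Q)"
    if A: "A \<in> [{1..n}]\<^bsup>Suc s\<^esup>" for A
  proof -
    obtain Q0 where Q0: "is_clique V E k Q0" "\<forall>X. X \<subseteq> A \<and> card X = s \<longrightarrow> S X \<subseteq> Q0"
      "\<forall>Y. Y \<subseteq> {1..n} \<and> card Y = s \<and> \<not> Y \<subseteq> A \<longrightarrow> \<not> S Y \<subseteq> Q0"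
      using Q[of A] A by (auto simp: nsets_def)
    then show ?thesis by (intro exI[of _ Q0]) (auto simp: nsets_def)
  qed
  have "\<exists>T x. is_clique V E (k - s - 1) T \<and> inj_on x {1..n} \<and> (\<forall>i\<in>{1..n}. x i \<in> V - T)
          \<and> (\<forall>X \<in> [{1..n}]\<^bsup>s\<^esup>. S X = T \<union> x ` X)"
    by (rule clique_facets_decompose[OF finite_atLeastAtMost _ _ _ S_clique' S_inj Q'])
      (use s2 ks ns in simp_all)
  then show ?thesis unfolding nsets_eq Ball_def mem_Collect_eq .
qed

end
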